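(* Let $m\ge 3$, $H=B(l_1,\ldots,l_m)$ and $G=H^2$. Then $G$ is equitably $(m+1)$-choosable.
   Context: All graphs are finite and simple. For $m,l_1,\ldots,l_m\in\mathbb{N}$ with $l_1\le\cdots\le l_m$, $B(l_1,\ldots,l_m)$ is the graph with vertex set $\{u\}\cup\{v_{i,j}: i\in[m], j\in[l_i]\}$ in which, for each $i\in[m]$, consecutive vertices in the sequence $u, v_{i,1},\ldots,v_{i,l_i}$ are adjacent (and there are no other edges). For a graph $H$, $H^2$ has vertex set $V(H)$ with two vertices adjacent iff their distance in $H$ is 1 or 2. A $k$-assignment $L$ assigns to each vertex a set of exactly $k$ colors; an equitable $L$-coloring of $G$ is a proper coloring $f$ with $f(v)\in L(v)$ such that no color is used more than $\lceil |V(G)|/k\rceil$ times; $G$ is equitably $k$-choosable if it has an equitable $L$-coloring for every $k$-assignment $L$. *)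

theory Defs
  imports Complex_Main
begin

text \<open>Simple graphs: a finite vertex set V and a symmetric irreflexive adjacency
relation E (only its restriction to V matters).\<close>

definition B_verts :: "nat \<Rightarrow> (nat \<Rightarrow> nat) \<Rightarrow> (nat \<times> nat) option set" where
  "B_verts m l = {None} \<union> {Some (i, j) | i j. 1 \<le> i \<and> i \<le> m \<and> 1 \<le> j \<and> j \<le> l i}"

text \<open>u is None, v_{i,j} is Some (i,j).\<close>
definition B_adj :: "nat \<Rightarrow> (nat \<Rightarrow> nat) \<Rightarrow> (nat \<times> nat) option \<Rightarrow> (nat \<times> nat) option \<Rightarrow> bool" where
  "B_adj m l x y \<longleftrightarrow> x \<in> B_verts m l \<and> y \<in> B_verts m l \<and>
     ((\<exists>i. (x = None \<and> y = Some (i, 1)) \<or> (y = None \<and> x = Some (i, 1))) \<or>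
      (\<exists>i j. (x = Some (i, j) \<and> y = Some (i, Suc j)) \<or> (y = Some (i, j) \<and> x = Some (i, Suc j))))"

definition square_adj :: "'a set \<Rightarrow> ('a \<Rightarrow> 'a \<Rightarrow> bool) \<Rightarrow> 'a \<Rightarrow> 'a \<Rightarrow> bool" where
  "square_adj V E x y \<longleftrightarrow> x \<in> V \<and> y \<in> V \<and> x \<noteq> y \<and>
     (E x y \<or> (\<exists>w\<in>V. E x w \<and> E w y))"

definition k_assignment :: "'a set \<Rightarrow> nat \<Rightarrow> ('a \<Rightarrow> nat set) \<Rightarrow> bool" where
  "k_assignment V k L \<longleftrightarrow> (\<forall>v\<in>V. finite (L v) \<and> card (L v) = k)"

definition equitable_L_coloring ::
  "'a set \<Rightarrow> ('a \<Rightarrow> 'a \<Rightarrow> bool) \<Rightarrow> nat \<Rightarrow> ('a \<Rightarrow> nat set) \<Rightarrow> ('a \<Rightarrow> nat) \<Rightarrow> bool" where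
  "equitable_L_coloring V E k L f \<longleftrightarrow>
     (\<forall>v\<in>V. f v \<in> L v) \<and>
     (\<forall>x\<in>V. \<forall>y\<in>V. E x y \<longrightarrow> f x \<noteq> f y) \<and>
     (\<forall>c. card {v\<in>V. f v = c} \<le> nat \<lceil>real (card V) / real k\<rceil>)"

definition equitably_choosable :: "'a set \<Rightarrow> ('a \<Rightarrow> 'a \<Rightarrow> bool) \<Rightarrow> nat \<Rightarrow> bool" where
  "equitably_choosable V E k \<longleftrightarrow>
     (\<forall>L. k_assignment V k L \<longrightarrow> (\<exists>f. equitable_L_coloring V E k L f))"

end

theory Submission
  imports Defs
begin

text \<open>Induction on the number n = 1 + l_1 + ... + l_m of vertices. If n \<le> m + 1, all vertices
  get distinct colours. Otherwise remove R = (n - 1) mod (m + 1) + 1 vertices from the ends of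
  the legs, so that the remaining graph has a multiple of m + 1 vertices, and colour it
  equitably by induction. The removed vertices then get pairwise distinct colours from their
  lists, avoiding the colours of their neighbours in the remaining graph: each colour class
  grows by at most one while the bound \<lceil>n / (m + 1)\<rceil> grows by one. Such colours exist by a
  greedy choice of distinct representatives, because a removed vertex has a neighbour left only
  if it is one of the two removed vertices nearest to the rest of its leg, two only if it is the
  nearest one, and more only if it is the first vertex of a leg removed entirely; R is split
  among the legs so that these vertices are few.\<close>

section \<open>Extending equitable list colourings\<close>

lemma distinct_representatives_if_card_small_le:
  assumes "finite S" and "\<forall>x\<in>S. finite (A x)"
    and "\<And>j. card {x\<in>S. card (A x) \<le> j} \<le> j"
  shows "\<exists>g. inj_on g S \<and> (\<forall>x\<in>S. g x \<in> A x)"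
  using assms
proof (induction "card S" arbitrary: S)
  case 0
  then show ?case by auto
next
  case (Suc n)
  then have "S \<noteq> {}" by auto
  then have "Max ((\<lambda>x. card (A x)) ` S) \<in> (\<lambda>x. card (A x)) ` S"
    using Suc.prems(1) by (intro Max_in) auto
  then obtain z where z: "z \<in> S" and "card (A z) = Max ((\<lambda>x. card (A x)) ` S)"
    by (metis imageE)
  then have z_max: "\<forall>x\<in>S. card (A x) \<le> card (A z)" using Suc.prems(1) by simp
  have "{x\<in>S. card (A x) \<le> card (A z)} = S" using z_max by auto
  then have large: "card S \<le> card (A z)" using Suc.prems(3) by metis
  have n: "n = card (S - {z})" using Suc.hyps(2) z by simp
  have "card {x\<in>S - {z}. card (A x) \<le> j} \<le> j" for j
  proof -
    have "card {x\<in>S - {z}. card (A x) \<le> j} \<le> card {x\<in>S. card (A x) \<le> j}"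
      by (rule card_mono) (use Suc.prems(1) in auto)
    then show ?thesis using Suc.prems(3)[of j] by linarith
  qed
  then obtain g where g: "inj_on g (S - {z})" "\<forall>x\<in>S - {z}. g x \<in> A x"
    using Suc.hyps(1)[OF n] Suc.prems by auto
  have "card (g ` (S - {z})) < card (A z)"
    using card_image_le[of "S - {z}" g] Suc.prems(1) n large Suc.hyps(2) by simp
  then obtain c where c: "c \<in> A z" "c \<notin> g ` (S - {z})"
    using card_mono[of "g ` (S - {z})" "A z"] Suc.prems(1) by force
  have "inj_on (g(z := c)) S"
    using g(1) c(2) z by (auto simp: inj_on_def)
  moreover have "\<forall>x\<in>S. (g(z := c)) x \<in> A x" using g(2) c(1) by auto
  ultimately show ?case by blast
qed

lemma equitably_choosable_subgraph:
  assumes "equitably_choosable V E' k" and "\<And>x y. x \<in> V \<Longrightarrow> y \<in> V \<Longrightarrow> E x y \<Longrightarrow> E' x y"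
  shows "equitably_choosable V E k"
  unfolding equitably_choosable_def
proof (intro allI impI)
  fix L assume "k_assignment V k L"
  then obtain f where "equitable_L_coloring V E' k L f"
    using assms(1) unfolding equitably_choosable_def by blast
  then have "equitable_L_coloring V E k L f"
    using assms(2) unfolding equitable_L_coloring_def by blast
  then show "\<exists>f. equitable_L_coloring V E k L f" by blast
qed

lemma nat_ceiling_divide_minus_mod_less:
  assumes "0 < k"
  shows "nat \<lceil>real (N - N mod k) / real k\<rceil> < nat \<lceil>real (Suc N) / real k\<rceil>"
proof -
  have "real (N - N mod k) / real k = real (N div k)"
    using assms by (simp add: minus_mod_eq_div_mult)
  then have lhs: "nat \<lceil>real (N - N mod k) / real k\<rceil> = N div k" by simp
  have "real (N div k * k) < real (Suc N)"
    using div_times_less_eq_dividend[of N k] by linarith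
  then have "real (N div k) < real (Suc N) / real k"
    using assms by (simp add: field_simps)
  then have "int (N div k) < \<lceil>real (Suc N) / real k\<rceil>"
    by (simp add: less_ceiling_iff)
  then show ?thesis unfolding lhs by (simp add: zless_nat_eq_int_zless)
qed

text \<open>The vertices of S get pairwise distinct colours avoiding those of their neighbours
  outside S, so every colour class grows by at most one. A vertex with t neighbours outside S
  keeps at least k - t colours of its list, so hall is what the greedy choice of distinct
  representatives needs.\<close>

lemma equitably_choosable_extend:
  assumes fin: "finite V" and sub: "S \<subseteq> V"
    and irrefl: "\<And>x. \<not> E x x" and sym: "symp E"
    and choosable: "equitably_choosable (V - S) E k"
    and bound: "nat \<lceil>real (card (V - S)) / real k\<rceil> < nat \<lceil>real (card V) / real k\<rceil>"
    and hall: "\<And>t. t \<le> k \<Longrightarrow> card {x\<in>S. t \<le> card {y\<in>V - S. E x y}} + t \<le> k"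
  shows "equitably_choosable V E k"
  unfolding equitably_choosable_def
proof (intro allI impI)
  fix L assume L: "k_assignment V k L"
  then have "k_assignment (V - S) k L" unfolding k_assignment_def by auto
  then obtain f where f: "equitable_L_coloring (V - S) E k L f"
    using choosable unfolding equitably_choosable_def by blast
  have finS: "finite S" using fin sub finite_subset by blast
  define N where "N x = {y\<in>V - S. E x y}" for x
  define A where "A x = L x - f ` N x" for x
  have finN: "finite (N x)" for x unfolding N_def using fin by auto
  have card_A: "k - card (N x) \<le> card (A x)" if "x \<in> S" for x
  proof -
    have "card (L x) = k" using L that sub unfolding k_assignment_def by auto
    moreover have "card (L x) - card (f ` N x) \<le> card (A x)"
      unfolding A_def by (rule diff_card_le_card_Diff) (use finN in auto)
    moreover have "card (f ` N x) \<le> card (N x)" by (rule card_image_le) (rule finN)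
    ultimately show ?thesis by linarith
  qed
  have "\<exists>g. inj_on g S \<and> (\<forall>x\<in>S. g x \<in> A x)"
  proof (rule distinct_representatives_if_card_small_le[OF finS])
    show "\<forall>x\<in>S. finite (A x)" unfolding A_def using L sub unfolding k_assignment_def by auto
    fix j
    show "card {x \<in> S. card (A x) \<le> j} \<le> j"
    proof (cases "k \<le> j")
      case True
      have "card {x \<in> S. card (A x) \<le> j} \<le> card S" by (rule card_mono) (use finS in auto)
      then show ?thesis using hall[of 0] True by simp
    next
      case False
      have "card {x \<in> S. card (A x) \<le> j} \<le> card {x\<in>S. k - j \<le> card (N x)}"
        by (rule card_mono) (use finS card_A in force)+
      then show ?thesis using hall[of "k - j"] False unfolding N_def by simp
    qed
  qed
  then obtain g where g: "inj_on g S" "\<forall>x\<in>S. g x \<in> A x" by blast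
  define h where "h x = (if x \<in> S then g x else f x)" for x
  have "equitable_L_coloring V E k L h"
    unfolding equitable_L_coloring_def
  proof (intro conjI ballI allI impI)
    fix v assume "v \<in> V"
    then show "h v \<in> L v" using f g unfolding h_def A_def equitable_L_coloring_def by auto
  next
    fix x y assume xy: "x \<in> V" "y \<in> V" "E x y"
    then have "x \<noteq> y" using irrefl by metis
    show "h x \<noteq> h y"
    proof (cases "x \<in> S"; cases "y \<in> S")
      assume "x \<in> S" "y \<in> S"
      then show ?thesis using g(1) \<open>x \<noteq> y\<close> unfolding h_def inj_on_def by auto
    next
      assume "x \<in> S" "y \<notin> S"
      then show ?thesis using g(2) xy unfolding h_def A_def N_def by auto
    next
      assume "x \<notin> S" "y \<in> S"
      then have "x \<in> N y" using xy sympD[OF sym] unfolding N_def by blast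
      moreover have "g y \<in> L y - f ` N y" using g(2) \<open>y \<in> S\<close> unfolding A_def by blast
      ultimately have "f x \<noteq> g y" by (metis DiffD2 imageI)
      then show ?thesis using \<open>x \<notin> S\<close> \<open>y \<in> S\<close> unfolding h_def by simp
    next
      assume "x \<notin> S" "y \<notin> S"
      then show ?thesis using f xy unfolding h_def equitable_L_coloring_def by auto
    qed
  next
    fix c
    have "{v\<in>V. h v = c} = {v\<in>V - S. f v = c} \<union> {v\<in>S. g v = c}"
      unfolding h_def using sub by auto
    then have "card {v\<in>V. h v = c} \<le> card {v\<in>V - S. f v = c} + card {v\<in>S. g v = c}"
      by (simp add: card_Un_le)
    moreover have "card {v\<in>V - S. f v = c} \<le> nat \<lceil>real (card (V - S)) / real k\<rceil>"
      using f unfolding equitable_L_coloring_def by blast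
    moreover have "card {v\<in>S. g v = c} \<le> 1"
      using g(1) finS card_le_Suc0_iff_eq[of "{v\<in>S. g v = c}"] unfolding inj_on_def by auto
    ultimately show "card {v\<in>V. h v = c} \<le> nat \<lceil>real (card V) / real k\<rceil>"
      using bound by linarith
  qed
  then show "\<exists>f. equitable_L_coloring V E k L f" by blast
qed

lemma equitably_choosable_if_card_le:
  assumes "finite V" and "card V \<le> k"
    and "\<And>x. \<not> E x x" and "symp E"
  shows "equitably_choosable V E k"
proof (cases "V = {}")
  case True
  then show ?thesis unfolding equitably_choosable_def equitable_L_coloring_def by simp
next
  case False
  then have "0 < card V" using assms(1) by (simp add: card_gt_0_iff)
  show ?thesis
  proof (rule equitably_choosable_extend[where S = V])
    show "equitably_choosable (V - V) E k"
      unfolding equitably_choosable_def equitable_L_coloring_def by simp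
    show "nat \<lceil>real (card (V - V)) / real k\<rceil> < nat \<lceil>real (card V) / real k\<rceil>"
      using \<open>0 < card V\<close> assms(2) by simp
    fix t assume "t \<le> k"
    then show "card {x\<in>V. t \<le> card {y\<in>V - V. E x y}} + t \<le> k"
      using assms(2) by (cases "t = 0") auto
  qed (use assms in auto)
qed

section \<open>The spider and its square\<close>

lemma Some_in_B_verts [simp]:
  "Some (i, j) \<in> B_verts m l \<longleftrightarrow> 1 \<le> i \<and> i \<le> m \<and> 1 \<le> j \<and> j \<le> l i"
  unfolding B_verts_def by auto

lemma None_in_B_verts [simp]: "None \<in> B_verts m l"
  unfolding B_verts_def by auto

lemma B_verts_eq: "B_verts m l = insert None (Some ` Sigma {1..m} (\<lambda>i. {1..l i}))"
  unfolding B_verts_def by auto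

lemma finite_B_verts [simp]: "finite (B_verts m l)"
  unfolding B_verts_eq by auto

lemma card_B_verts: "card (B_verts m l) = Suc (\<Sum>i=1..m. l i)"
proof -
  have "card (Some ` Sigma {1..m} (\<lambda>i. {1..l i})) = (\<Sum>i=1..m. l i)"
    by (subst card_image) simp_all
  then show ?thesis unfolding B_verts_eq by (subst card_insert_disjoint) auto
qed

lemma B_verts_mono: "(\<And>i. l' i \<le> l i) \<Longrightarrow> B_verts m l' \<subseteq> B_verts m l"
  unfolding B_verts_def using le_trans by fastforce

lemma B_adj_sym: "B_adj m l x y \<longleftrightarrow> B_adj m l y x"
  unfolding B_adj_def by blast

lemma symp_B_adj: "symp (B_adj m l)"
  using B_adj_sym by (blast intro: sympI)

lemma B_adj_SomeD:
  "B_adj m l x (Some (i, j)) \<Longrightarrow>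
     (x = None \<and> j = 1) \<or> (x = Some (i, j - 1) \<and> 2 \<le> j) \<or> x = Some (i, Suc j)"
  unfolding B_adj_def by auto

lemma B_adj_NoneD: "B_adj m l x None \<Longrightarrow> \<exists>i. x = Some (i, 1)"
  unfolding B_adj_def by auto

lemma square_adj_irrefl: "\<not> square_adj V E x x"
  unfolding square_adj_def by simp

lemma symp_square_adj: "symp E \<Longrightarrow> symp (square_adj V E)"
  unfolding square_adj_def symp_def by metis

lemma square_adj_B_SomeD:
  assumes "square_adj (B_verts m l) (B_adj m l) (Some (i, j)) y"
  shows "(y = None \<and> j \<le> 2)
    \<or> (\<exists>j'. y = Some (i, j') \<and> j' \<noteq> j \<and> j \<le> j' + 2 \<and> j' \<le> j + 2)
    \<or> (j = 1 \<and> (\<exists>i'. y = Some (i', 1)))"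
proof -
  have ne: "y \<noteq> Some (i, j)" using assms unfolding square_adj_def by auto
  from assms consider "B_adj m l y (Some (i, j))"
    | w where "B_adj m l w (Some (i, j))" "B_adj m l y w"
    unfolding square_adj_def using B_adj_sym by metis
  then show ?thesis
  proof cases
    case 1
    from B_adj_SomeD[OF this] show ?thesis using ne by auto
  next
    case 2
    from B_adj_SomeD[OF 2(1)]
    consider "w = None" "j = 1" | "w = Some (i, j - 1)" "2 \<le> j" | "w = Some (i, Suc j)"
      by blast
    then show ?thesis
    proof cases
      case 1
      then show ?thesis using B_adj_NoneD 2(2) by metis
    next
      case 2
      from B_adj_SomeD[of m l y i "j - 1"] show ?thesis using ne 2 \<open>B_adj m l y w\<close> by auto
    next
      case 3
      from B_adj_SomeD[of m l y i "Suc j"] show ?thesis using ne 3 \<open>B_adj m l y w\<close> by auto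
    qed
  qed
qed

text \<open>Shortening legs does not create new edges in the square: a common neighbour outside
  the shorter graph can only be a removed vertex whose unique remaining neighbour is then
  both endpoints.\<close>

lemma square_adj_B_restrict:
  assumes le: "\<And>i. l' i \<le> l i" and x: "x \<in> B_verts m l'" and y: "y \<in> B_verts m l'"
    and adj: "square_adj (B_verts m l) (B_adj m l) x y"
  shows "square_adj (B_verts m l') (B_adj m l') x y"
proof -
  have adj_restrict: "B_adj m l' a b" if "B_adj m l a b" "a \<in> B_verts m l'" "b \<in> B_verts m l'" for a b
    using that unfolding B_adj_def by blast
  have ne: "x \<noteq> y" using adj unfolding square_adj_def by auto
  from adj consider "B_adj m l x y" | w where "w \<in> B_verts m l" "B_adj m l x w" "B_adj m l w y"
    unfolding square_adj_def by blast
  then show ?thesis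
  proof cases
    case 1
    then show ?thesis using adj_restrict x y ne unfolding square_adj_def by blast
  next
    case 2
    show ?thesis
    proof (cases "w \<in> B_verts m l'")
      case True
      then show ?thesis using adj_restrict x y ne 2 unfolding square_adj_def by blast
    next
      case False
      then obtain i j where w: "w = Some (i, j)" using None_in_B_verts by (cases w) auto
      with False 2(1) have "l' i < j" "1 \<le> i" "i \<le> m" "1 \<le> j" by auto
      then have "z = (if j = 1 then None else Some (i, j - 1))"
        if "B_adj m l z w" "z \<in> B_verts m l'" for z
        using B_adj_SomeD[of m l z i j] that w by auto
      then have "x = y" using 2 x y B_adj_sym by metis
      then show ?thesis using ne by simp
    qed
  qed
qed

section \<open>Shortening the legs\<close>

lemma card_square_nbrs_removed_vertex:
  fixes l l' :: "nat \<Rightarrow> nat"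
  assumes m: "2 \<le> m" and i: "1 \<le> i" "i \<le> m" and j: "l' i < j"
  defines "d \<equiv> card {y \<in> B_verts m l'. square_adj (B_verts m l) (B_adj m l) (Some (i, j)) y}"
  shows "d \<le> m" and "1 \<le> d \<Longrightarrow> j \<le> l' i + 2" and "2 \<le> d \<Longrightarrow> j = l' i + 1"
    and "3 \<le> d \<Longrightarrow> j = 1"
proof -
  define N where "N = {y \<in> B_verts m l'. square_adj (B_verts m l) (B_adj m l) (Some (i, j)) y}"
  define back2 where "back2 = (if j = 2 then None else Some (i, j - 2))"
  have nbr: "y \<in> B_verts m l'"
    "(y = None \<and> j \<le> 2) \<or> (\<exists>j'. y = Some (i, j') \<and> j \<le> j' + 2)
      \<or> (j = 1 \<and> (\<exists>i'. y = Some (i', 1) \<and> i' \<noteq> i))"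
    if "y \<in> N" for y
    using that square_adj_B_SomeD j unfolding N_def by fastforce+
  have far: "N = {}" if "l' i + 3 \<le> j"
    using nbr that by fastforce
  have two_back: "N \<subseteq> {back2}" if "j = l' i + 2"
    using nbr that unfolding back2_def by fastforce
  have one_back: "N \<subseteq> {Some (i, j - 1), back2}" if "j = l' i + 1" "2 \<le> j"
    using nbr that unfolding back2_def by fastforce
  have first: "N \<subseteq> insert None ((\<lambda>i'. Some (i', 1)) ` ({1..m} - {i}))" if "j = 1"
  proof
    fix y assume "y \<in> N"
    from nbr[OF this] that j show "y \<in> insert None ((\<lambda>i'. Some (i', 1)) ` ({1..m} - {i}))"
      by auto
  qed
  have card_two_back: "card N \<le> 1" if "j = l' i + 2"
    using card_mono[OF _ two_back[OF that]] by simp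
  have card_one_back: "card N \<le> 2" if "j = l' i + 1" "2 \<le> j"
  proof -
    have "card N \<le> card {Some (i, j - 1), back2}" by (rule card_mono) (use one_back[OF that] in auto)
    also have "\<dots> \<le> 2" by (simp add: card_insert_if)
    finally show ?thesis .
  qed
  have card_first: "card N \<le> m" if "j = 1"
  proof -
    have "card N \<le> card (insert None ((\<lambda>i'. Some (i', 1::nat)) ` ({1..m} - {i})))"
      by (rule card_mono) (use first[OF that] in auto)
    also have "\<dots> \<le> Suc (card ((\<lambda>i'. Some (i', 1::nat)) ` ({1..m} - {i})))"
      by (simp add: card_insert_if)
    also have "\<dots> \<le> Suc (card ({1..m::nat} - {i}))" by (simp add: card_image_le)
    finally show ?thesis using i by simp
  qed
  have d: "d = card N" unfolding d_def N_def ..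
  have cases: "l' i + 3 \<le> j \<or> j = l' i + 2 \<or> (j = l' i + 1 \<and> 2 \<le> j) \<or> j = 1"
    using j by linarith
  then show "d \<le> m"
    using far card_two_back card_one_back card_first m unfolding d by fastforce
  show "j \<le> l' i + 2" if "1 \<le> d"
    using far that unfolding d by fastforce
  show "j = l' i + 1" if "2 \<le> d"
    using cases far card_two_back j that unfolding d by fastforce
  show "j = 1" if "3 \<le> d"
    using cases far card_two_back card_one_back that unfolding d by fastforce
qed

lemma card_removed_vertices_many_nbrs:
  fixes l l' :: "nat \<Rightarrow> nat"
  assumes m: "2 \<le> m" and le: "\<And>i. l' i \<le> l i"
    and emptied: "card {i\<in>{1..m}. l' i = 0 \<and> 0 < l i} \<le> 1"
    and shortened: "card {i\<in>{1..m}. l' i < l i} \<le> m - 1"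
    and shortened2: "card {i\<in>{1..m}. l' i < l i} + card {i\<in>{1..m}. l' i + 2 \<le> l i} \<le> m"
    and few: "(\<Sum>i=1..m. l i) \<le> (\<Sum>i=1..m. l' i) + (m + 1)"
    and t: "t \<le> m + 1"
  shows "card {x \<in> B_verts m l - B_verts m l'.
      t \<le> card {y \<in> B_verts m l'. square_adj (B_verts m l) (B_adj m l) x y}} + t \<le> m + 1"
proof -
  define d where "d x = card {y \<in> B_verts m l'. square_adj (B_verts m l) (B_adj m l) x y}" for x
  define S where "S = B_verts m l - B_verts m l'"
  define roots where "roots = (\<lambda>i. Some (i, 1::nat)) ` {i\<in>{1..m}. l' i = 0 \<and> 0 < l i}"
  define tips1 where "tips1 = (\<lambda>i. Some (i, Suc (l' i))) ` {i\<in>{1..m}. l' i < l i}"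
  define tips2 where "tips2 = (\<lambda>i. Some (i, l' i + 2)) ` {i\<in>{1..m}. l' i + 2 \<le> l i}"
  have degrees: "d x \<le> m \<and> (1 \<le> d x \<longrightarrow> x \<in> tips1 \<union> tips2) \<and> (2 \<le> d x \<longrightarrow> x \<in> tips1)
      \<and> (3 \<le> d x \<longrightarrow> x \<in> roots)" if "x \<in> S" for x
  proof -
    obtain i j where ij: "x = Some (i, j)" "1 \<le> i" "i \<le> m" "l' i < j" "j \<le> l i"
      using \<open>x \<in> S\<close> unfolding S_def B_verts_def by auto
    note bounds = card_square_nbrs_removed_vertex[where l = l and l' = l', OF m ij(2-4),
      folded ij(1) d_def]
    have "1 \<le> d x \<longrightarrow> x \<in> tips1 \<union> tips2"
    proof
      assume "1 \<le> d x"
      then have "j = Suc (l' i) \<or> j = l' i + 2" using bounds(2) ij(4) by linarith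
      then show "x \<in> tips1 \<union> tips2" unfolding tips1_def tips2_def using ij by auto
    qed
    moreover have "2 \<le> d x \<longrightarrow> x \<in> tips1"
      using bounds(3) ij unfolding tips1_def by auto
    moreover have "3 \<le> d x \<longrightarrow> x \<in> roots"
      using bounds(4) ij unfolding roots_def by auto
    ultimately show ?thesis using bounds(1) by blast
  qed
  have card_roots: "card roots \<le> 1"
    using emptied card_image_le[of "{i\<in>{1..m}. l' i = 0 \<and> 0 < l i}" "\<lambda>i. Some (i, 1::nat)"]
    unfolding roots_def by simp
  have card_tips: "card tips1 \<le> card {i\<in>{1..m}. l' i < l i}"
    "card tips2 \<le> card {i\<in>{1..m}. l' i + 2 \<le> l i}"
    unfolding tips1_def tips2_def by (simp_all add: card_image_le)
  have fin: "finite roots" "finite tips1" "finite tips2" unfolding roots_def tips1_def tips2_def by simp_all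
  have card_S: "card S \<le> m + 1"
    using B_verts_mono[of l' l, OF le] few unfolding S_def
    by (simp add: card_Diff_subset card_B_verts)
  consider "t = 0" | "t = 1" | "t = 2" | "3 \<le> t" "t \<le> m" | "t = m + 1"
    using t by linarith
  then have "card {x\<in>S. t \<le> d x} + t \<le> m + 1"
  proof cases
    case 1
    then show ?thesis using card_S by simp
  next
    case 2
    have "card {x\<in>S. t \<le> d x} \<le> card (tips1 \<union> tips2)"
      by (rule card_mono) (use fin degrees 2 in auto)
    also have "\<dots> \<le> card tips1 + card tips2" by (rule card_Un_le)
    finally show ?thesis using card_tips shortened2 2 by linarith
  next
    case 3
    have "card {x\<in>S. t \<le> d x} \<le> card tips1"
      by (rule card_mono) (use fin degrees 3 in auto)
    then show ?thesis using card_tips shortened 3 m by linarith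
  next
    case 4
    have "card {x\<in>S. t \<le> d x} \<le> card roots"
      by (rule card_mono) (use fin degrees 4 in auto)
    then show ?thesis using card_roots 4 by linarith
  next
    case 5
    then have none: "{x\<in>S. t \<le> d x} = {}" using degrees by fastforce
    show ?thesis unfolding none using 5 by simp
  qed
  then show ?thesis unfolding S_def d_def .
qed

lemma equitably_choosable_square_B_shorten:
  fixes l l' :: "nat \<Rightarrow> nat"
  assumes m: "2 \<le> m" and le: "\<And>i. l' i \<le> l i"
    and emptied: "card {i\<in>{1..m}. l' i = 0 \<and> 0 < l i} \<le> 1"
    and shortened: "card {i\<in>{1..m}. l' i < l i} \<le> m - 1"
    and shortened2: "card {i\<in>{1..m}. l' i < l i} + card {i\<in>{1..m}. l' i + 2 \<le> l i} \<le> m"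
    and few: "(\<Sum>i=1..m. l i) \<le> (\<Sum>i=1..m. l' i) + (m + 1)"
    and bound: "nat \<lceil>real (card (B_verts m l')) / real (m + 1)\<rceil>
      < nat \<lceil>real (card (B_verts m l)) / real (m + 1)\<rceil>"
    and choosable: "equitably_choosable (B_verts m l') (square_adj (B_verts m l') (B_adj m l')) (m + 1)"
  shows "equitably_choosable (B_verts m l) (square_adj (B_verts m l) (B_adj m l)) (m + 1)"
proof (rule equitably_choosable_extend[where S = "B_verts m l - B_verts m l'"])
  have sub: "B_verts m l' \<subseteq> B_verts m l" by (rule B_verts_mono) (rule le)
  then have V_minus: "B_verts m l - (B_verts m l - B_verts m l') = B_verts m l'" by auto
  show "equitably_choosable (B_verts m l - (B_verts m l - B_verts m l'))
      (square_adj (B_verts m l) (B_adj m l)) (m + 1)"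
    unfolding V_minus
    by (rule equitably_choosable_subgraph[OF choosable]) (rule square_adj_B_restrict[OF le])
  show "nat \<lceil>real (card (B_verts m l - (B_verts m l - B_verts m l'))) / real (m + 1)\<rceil>
      < nat \<lceil>real (card (B_verts m l)) / real (m + 1)\<rceil>"
    unfolding V_minus by (rule bound)
  fix t assume "t \<le> m + 1"
  then show "card {x \<in> B_verts m l - B_verts m l'. t \<le> card {y \<in> B_verts m l - (B_verts m l - B_verts m l').
      square_adj (B_verts m l) (B_adj m l) x y}} + t \<le> m + 1"
    unfolding V_minus by (rule card_removed_vertices_many_nbrs[OF m le emptied shortened shortened2 few])
qed (auto simp: square_adj_irrefl symp_square_adj symp_B_adj)

lemma exists_summands_le:
  fixes c :: "'a \<Rightarrow> nat"
  assumes "finite I" and "s \<le> (\<Sum>i\<in>I. c i)"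
  shows "\<exists>\<delta>. (\<forall>i. \<delta> i \<le> c i) \<and> (\<Sum>i\<in>I. \<delta> i) = s"
  using assms
proof (induction I arbitrary: s rule: finite_induct)
  case empty
  then show ?case by (intro exI[of _ "\<lambda>_. 0"]) simp
next
  case (insert a I)
  define r where "r = s - min s (c a)"
  have "r \<le> (\<Sum>i\<in>I. c i)" using insert.prems insert.hyps unfolding r_def by simp
  then obtain \<delta> where \<delta>: "\<forall>i. \<delta> i \<le> c i" "(\<Sum>i\<in>I. \<delta> i) = r" using insert.IH by blast
  have "(\<Sum>i\<in>I. (\<delta>(a := min s (c a))) i) = r"
    using \<delta>(2) insert.hyps by (metis fun_upd_other sum.cong)
  then have "(\<Sum>i\<in>insert a I. (\<delta>(a := min s (c a))) i) = s"
    using insert.hyps unfolding r_def by simp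
  moreover have "\<forall>i. (\<delta>(a := min s (c a))) i \<le> c i" using \<delta>(1) by simp
  ultimately show ?case by blast
qed

lemma card_pos_add_card_ge2_add_card_ge3_le_sum:
  fixes \<delta> :: "'a \<Rightarrow> nat"
  assumes "finite I"
  shows "card {i\<in>I. 0 < \<delta> i} + card {i\<in>I. 2 \<le> \<delta> i} + card {i\<in>I. 3 \<le> \<delta> i} \<le> (\<Sum>i\<in>I. \<delta> i)"
proof -
  have card_eq: "card {i\<in>I. P i} = (\<Sum>i\<in>I. if P i then 1 else 0)" for P
    using sum.inter_filter[OF assms, of "\<lambda>_. 1::nat" P] by simp
  show ?thesis
    unfolding card_eq sum.distrib[symmetric] by (rule sum_mono) auto
qed

lemma exists_removal_profile:
  fixes l :: "'a \<Rightarrow> nat"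
  assumes fin: "finite I" and i0: "i0 \<in> I" "b \<le> l i0" and b: "b \<le> R"
    and R: "R \<le> (\<Sum>i\<in>I. l i - 1)"
  obtains \<delta> where "\<And>i. \<delta> i \<le> l i" "(\<Sum>i\<in>I. \<delta> i) = R" "b \<le> \<delta> i0"
    "\<And>i. i \<noteq> i0 \<Longrightarrow> \<delta> i \<le> l i - 1"
proof -
  define c where "c i = (if i = i0 then l i - b else l i - 1)" for i
  have "(\<Sum>i\<in>I - {i0}. c i) = (\<Sum>i\<in>I - {i0}. l i - 1)"
    unfolding c_def by (rule sum.cong) auto
  then have "R - b \<le> (\<Sum>i\<in>I. c i)"
    using R i0 sum.remove[OF fin i0(1), of c] sum.remove[OF fin i0(1), of "\<lambda>i. l i - 1"]
    unfolding c_def by simp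
  then obtain \<delta> where \<delta>: "\<forall>i. \<delta> i \<le> c i" "(\<Sum>i\<in>I. \<delta> i) = R - b"
    using exists_summands_le[OF fin] by blast
  define \<delta>' where "\<delta>' i = \<delta> i + (if i = i0 then b else 0)" for i
  have sum: "(\<Sum>i\<in>I. \<delta>' i) = R"
    unfolding \<delta>'_def using \<delta>(2) b fin i0(1) by (simp add: sum.distrib)
  have le: "\<delta>' i \<le> l i" and ne: "i \<noteq> i0 \<Longrightarrow> \<delta>' i \<le> l i - 1" for i
    using \<delta>(1) i0(2) unfolding \<delta>'_def c_def by (auto dest: spec[of _ i])
  have "b \<le> \<delta>' i0" unfolding \<delta>'_def by simp
  with le sum show ?thesis using ne by (rule that)
qed

lemma exists_leg_shortening:
  fixes l :: "nat \<Rightarrow> nat"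
  assumes m: "3 \<le> m" and R: "R \<le> m + 1" "R \<le> (\<Sum>i=1..m. l i - 1)"
  obtains l' where "\<And>i. l' i \<le> l i" "(\<Sum>i=1..m. l' i) + R = (\<Sum>i=1..m. l i)"
    "card {i\<in>{1..m}. l' i = 0 \<and> 0 < l i} \<le> 1"
    "card {i\<in>{1..m}. l' i < l i} \<le> m - 1"
    "card {i\<in>{1..m}. l' i < l i} + card {i\<in>{1..m}. l' i + 2 \<le> l i} \<le> m"
proof -
  txt \<open>Leg i0 loses at least b vertices, so it is counted b times in
    #{\<delta> > 0} + #{\<delta> \<ge> 2} + #{\<delta> \<ge> 3} \<le> R; for R \<ge> m this slack is what the counting
    conditions need.\<close>
  obtain i0 b where i0: "i0 \<in> {1..m}" "b \<le> l i0" "b \<le> R"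
    and b: "b = 0 \<and> R + 1 \<le> m \<or> b = 2 \<and> R \<le> m \<or> b = 3 \<and> R \<le> m + 1"
  proof -
    consider "R + 1 \<le> m" | "m \<le> R" "\<exists>i\<in>{1..m}. 3 \<le> l i" | "m \<le> R" "\<forall>i\<in>{1..m}. l i \<le> 2"
      by force
    then show ?thesis
    proof cases
      case 1
      then show ?thesis using that[of 1 0] m by auto
    next
      case 2
      then show ?thesis using that m R(1) by fastforce
    next
      case 3
      have "(\<Sum>i=1..m. l i - 1) \<le> (\<Sum>i=1..m. 1)" by (rule sum_mono) (use 3 in fastforce)
      then have "R \<le> m" using R by simp
      have "(\<Sum>i=1..m. l i - 1) \<noteq> 0" using R 3 m by linarith
      then have "\<exists>i\<in>{1..m}. l i - 1 \<noteq> 0" by (simp add: sum_eq_0_iff)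
      then obtain i0 where "i0 \<in> {1..m}" "l i0 - 1 \<noteq> 0" by blast
      then show ?thesis using that[of i0 2] 3 \<open>R \<le> m\<close> m by auto
    qed
  qed
  obtain \<delta> where \<delta>: "\<And>i. \<delta> i \<le> l i" "(\<Sum>i=1..m. \<delta> i) = R" "b \<le> \<delta> i0"
    "\<And>i. i \<noteq> i0 \<Longrightarrow> \<delta> i \<le> l i - 1"
    using exists_removal_profile[of "{1..m}" i0 b l R] i0 R(2) by auto
  define l' where "l' i = l i - \<delta> i" for i
  have "{i\<in>{1..m}. l' i = 0 \<and> 0 < l i} \<subseteq> {i0}"
    using \<delta>(4) unfolding l'_def by fastforce
  then have emptied: "card {i\<in>{1..m}. l' i = 0 \<and> 0 < l i} \<le> 1"
    using card_mono[of "{i0}"] by fastforce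
  have "l' i < l i \<longleftrightarrow> 0 < \<delta> i" "l' i + 2 \<le> l i \<longleftrightarrow> 2 \<le> \<delta> i" for i
    using \<delta>(1)[of i] unfolding l'_def by linarith+
  then have shortened: "{i\<in>{1..m}. l' i < l i} = {i\<in>{1..m}. 0 < \<delta> i}"
    and shortened2: "{i\<in>{1..m}. l' i + 2 \<le> l i} = {i\<in>{1..m}. 2 \<le> \<delta> i}"
    by auto
  have two: "1 \<le> card {i\<in>{1..m}. 2 \<le> \<delta> i}" if "2 \<le> b"
    using i0(1) \<delta>(3) that by (auto simp: Suc_le_eq card_gt_0_iff)
  have three: "1 \<le> card {i\<in>{1..m}. 3 \<le> \<delta> i}" if "b = 3"
    using i0(1) \<delta>(3) that by (auto simp: Suc_le_eq card_gt_0_iff)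
  have "card {i\<in>{1..m}. 0 < \<delta> i} + card {i\<in>{1..m}. 2 \<le> \<delta> i}
      + card {i\<in>{1..m}. 3 \<le> \<delta> i} \<le> R"
    using card_pos_add_card_ge2_add_card_ge3_le_sum[of "{1..m}" \<delta>] \<delta>(2) by simp
  then have "card {i\<in>{1..m}. l' i < l i} \<le> m - 1"
    "card {i\<in>{1..m}. l' i < l i} + card {i\<in>{1..m}. l' i + 2 \<le> l i} \<le> m"
    unfolding shortened shortened2 using b two three by auto
  moreover have "(\<Sum>i=1..m. l' i) + R = (\<Sum>i=1..m. l i)"
    using \<delta>(1,2) sum_mono[of "{1..m}" \<delta> l] unfolding l'_def
    by (simp add: sum_subtractf_nat)
  moreover have "l' i \<le> l i" for i unfolding l'_def by simp
  ultimately show ?thesis using that emptied by blast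
qed

lemma equitably_choosable_square_B:
  fixes l :: "nat \<Rightarrow> nat"
  assumes m: "3 \<le> m"
  shows "equitably_choosable (B_verts m l) (square_adj (B_verts m l) (B_adj m l)) (m + 1)"
proof (induction "\<Sum>i=1..m. l i" arbitrary: l rule: less_induct)
  case less
  define N where "N = (\<Sum>i=1..m. l i)"
  show ?case
  proof (cases "N \<le> m")
    case True
    then show ?thesis
      by (intro equitably_choosable_if_card_le)
        (auto simp: card_B_verts N_def square_adj_irrefl symp_square_adj symp_B_adj)
  next
    case False
    define R where "R = N mod (m + 1) + 1"
    have "N mod (m + 1) = (N - (m + 1)) mod (m + 1)" using False by (simp add: le_mod_geq)
    then have "R + m \<le> N" unfolding R_def using False mod_less_eq_dividend[of "N - (m + 1)" "m + 1"] by linarith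
    moreover have "N \<le> (\<Sum>i=1..m. (l i - 1) + 1)"
      unfolding N_def by (rule sum_mono) simp
    then have "N \<le> (\<Sum>i=1..m. l i - 1) + m" unfolding sum.distrib by simp
    ultimately have R_le: "R \<le> m + 1" "R \<le> (\<Sum>i=1..m. l i - 1)" unfolding R_def by simp_all
    obtain l' where l': "\<And>i. l' i \<le> l i" "(\<Sum>i=1..m. l' i) + R = N"
      "card {i\<in>{1..m}. l' i = 0 \<and> 0 < l i} \<le> 1"
      "card {i\<in>{1..m}. l' i < l i} \<le> m - 1"
      "card {i\<in>{1..m}. l' i < l i} + card {i\<in>{1..m}. l' i + 2 \<le> l i} \<le> m"
      using exists_leg_shortening[OF m R_le] unfolding N_def by blast
    have "card (B_verts m l') = N - N mod (m + 1)" "card (B_verts m l) = Suc N"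
      using l'(2) unfolding card_B_verts R_def N_def by simp_all
    then have "nat \<lceil>real (card (B_verts m l')) / real (m + 1)\<rceil>
        < nat \<lceil>real (card (B_verts m l)) / real (m + 1)\<rceil>"
      using nat_ceiling_divide_minus_mod_less[of "m + 1" N] by simp
    moreover have "(\<Sum>i=1..m. l i) \<le> (\<Sum>i=1..m. l' i) + (m + 1)"
      using l'(2) R_le(1) unfolding N_def by linarith
    moreover have "equitably_choosable (B_verts m l') (square_adj (B_verts m l') (B_adj m l')) (m + 1)"
      by (rule less) (use l'(2) in \<open>simp add: R_def N_def\<close>)
    ultimately show ?thesis
      using equitably_choosable_square_B_shorten[of m l' l] m l' by simp
  qed
qed

theorem lemma2p8:
  fixes m :: nat and l :: "nat \<Rightarrow> nat"
  assumes "m \<ge> 3"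
    and "\<And>i. 1 \<le> i \<Longrightarrow> i \<le> m \<Longrightarrow> l i \<ge> 1"
    and "\<And>i j. 1 \<le> i \<Longrightarrow> i \<le> j \<Longrightarrow> j \<le> m \<Longrightarrow> l i \<le> l j"
  shows "equitably_choosable (B_verts m l) (square_adj (B_verts m l) (B_adj m l)) (m + 1)"
  using assms(1) by (rule equitably_choosable_square_B)

end
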